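(* Let $N\ge 2$, $M\ge 2$, $d\ge 2$ be integers and let $\{p(\boldsymbol{a}|\boldsymbol{x})\}$ be any $(N+1)$-partite nonsignalling probability distribution in which each party $A^{(k)}$, $k=1,\dots,N+1$, chooses one of $M$ measurements $A^{(k)}_{x_k}$, $x_k\in\{1,\dots,M\}$, each with $d$ outcomes in $\mathbb{Z}_d=\{0,\dots,d-1\}$. Then $$I^{N,M,d}_{A^{(1)}\cdots A^{(N)}}+\big\langle[A^{(k)}_{x_k}-A^{(N+1)}_{x_{N+1}}]\big\rangle+\big\langle[A^{(N+1)}_{x_{N+1}}-A^{(k)}_{x_k}]\big\rangle\ \ge\ d-1$$ for all $x_k,x_{N+1}\in\{1,\dots,M\}$ and all $k\in\{1,\dots,N\}$, where $I^{N,M,d}_{A^{(1)}\cdots A^{(N)}}$ is the Bell expression (evaluated on the marginal of the first $N$ parties) defined in the context.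
   Context: Notation: $[\Omega]$ denotes $\Omega$ modulo $d$, and $\langle[\Omega]\rangle=\sum_{i=0}^{d-1} i\,P([\Omega]=i)$, computed from the (well-defined by no-signalling) marginal joint distribution of the measurements appearing in $\Omega$. For a party $X$ with observables $X_1,\dots,X_M$, indices beyond $M$ are interpreted by $X_{iM+\gamma}:=[X_\gamma+i]$ (the outcome shifted by $i$ mod $d$), $\gamma\in\{1,\dots,M\}$. The Bell expression is defined recursively. For $N=2$: $I^{2,M,d}_{A^{(1)}A^{(2)}}=\sum_{\alpha=1}^{M}\big(\langle[A^{(1)}_\alpha-A^{(2)}_\alpha]\rangle+\langle[A^{(2)}_\alpha-A^{(1)}_{\alpha+1}]\rangle\big)$. For $N\ge3$: $I^{N,M,d}_{A^{(1)}\cdots A^{(N)}}=\frac1M\sum_{\alpha_{N-1}=1}^{M} I^{N-1,M,d}_{A^{(1)}\cdots A^{(N-1)}}(\alpha_{N-1})\circ A^{(N)}_{\alpha_{N-1}}$, where $I^{N-1,M,d}(\alpha_{N-1})$ is $I^{N-1,M,d}$ with the observable index $\alpha_{N-2}$ of the last party $A^{(N-1)}$ relabelled as $\alpha_{N-2}\to\alpha_{N-2}+\alpha_{N-1}-1$, and "$\circ A^{(N)}_{\gamma}$" means inserting $A^{(N)}_{\gamma}$ inside each bracket $\langle[\cdot]\rangle$ with the sign opposite to that of $A^{(N-1)}$ in that bracket. Explicitly, this gives $I^{N,M,d}=\frac{1}{M^{N-2}}\sum_{\alpha_1,\dots,\alpha_{N-1}=1}^{M}\Big(\big\langle[A^{(1)}_{\alpha_1}+S]\big\rangle+\big\langle[-A^{(1)}_{\alpha_1+1}-S]\big\rangle\Big)$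 with $S=\sum_{k=2}^{N-1}(-1)^{k-1}A^{(k)}_{\alpha_{k-1}+\alpha_k-1}+(-1)^{N-1}A^{(N)}_{\alpha_{N-1}}$ (for $N=2$, $S=-A^{(2)}_{\alpha_1}$). Its local (classical) bound is $I^{N,M,d}\ge d-1$ and its minimal nonsignalling value is $0$. Nonsignalling: marginals of any subset of parties are independent of the remaining parties' measurement choices. *)

theory Defs
  imports Complex_Main "HOL-Library.FuncSet"
begin

text \<open>Parties are indexed 0..n-1 (party A^(k) of the paper is index k-1).
  Settings are 1..M, outcomes 0..d-1.  A behaviour p maps an outcome
  vector a and a setting vector x (both extensional functions on the
  parties) to the probability p(a|x).\<close>

definition settings :: "nat \<Rightarrow> nat \<Rightarrow> (nat \<Rightarrow> nat) set" where
  "settings n M = {0..<n} \<rightarrow>\<^sub>E {1..M}"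

definition outcomes :: "nat \<Rightarrow> nat \<Rightarrow> (nat \<Rightarrow> nat) set" where
  "outcomes n d = {0..<n} \<rightarrow>\<^sub>E {0..<d}"

definition is_behaviour ::
  "nat \<Rightarrow> nat \<Rightarrow> nat \<Rightarrow> ((nat \<Rightarrow> nat) \<Rightarrow> (nat \<Rightarrow> nat) \<Rightarrow> real) \<Rightarrow> bool" where
  "is_behaviour n M d p \<longleftrightarrow>
     (\<forall>x\<in>settings n M. (\<forall>a\<in>outcomes n d. 0 \<le> p a x) \<and> (\<Sum>a\<in>outcomes n d. p a x) = 1)"

definition nonsignalling ::
  "nat \<Rightarrow> nat \<Rightarrow> nat \<Rightarrow> ((nat \<Rightarrow> nat) \<Rightarrow> (nat \<Rightarrow> nat) \<Rightarrow> real) \<Rightarrow> bool" where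
  "nonsignalling n M d p \<longleftrightarrow>
     (\<forall>S \<subseteq> {0..<n}. \<forall>x\<in>settings n M. \<forall>x'\<in>settings n M.
        (\<forall>i\<in>S. x i = x' i) \<longrightarrow>
        (\<forall>a\<in>outcomes n d.
           (\<Sum>b\<in>{b\<in>outcomes n d. \<forall>i\<in>S. b i = a i}. p b x) =
           (\<Sum>b\<in>{b\<in>outcomes n d. \<forall>i\<in>S. b i = a i}. p b x')))"

text \<open>A bracket term is a list of triples (party, observable index j, coefficient c),
  representing the sum of c * A^(party)_j.  Observable index j \<ge> 1 beyond M is
  interpreted as A_{iM+\<gamma>} = [A_\<gamma> + i], i.e. setting (j-1) mod M + 1 and outcome
  shift (j-1) div M.\<close>

definition obs_setting :: "nat \<Rightarrow> nat \<Rightarrow> nat" where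
  "obs_setting M j = (j - 1) mod M + 1"

definition obs_shift :: "nat \<Rightarrow> nat \<Rightarrow> int" where
  "obs_shift M j = int ((j - 1) div M)"

text \<open>Full setting vector used to evaluate a bracket: the parties appearing in
  the bracket get their settings, all other parties setting 1.  By nonsignalling
  this yields the marginal distribution of the parties in the bracket.\<close>
definition term_setting :: "nat \<Rightarrow> nat \<Rightarrow> (nat \<times> nat \<times> int) list \<Rightarrow> nat \<Rightarrow> nat" where
  "term_setting n M t = restrict (\<lambda>i. case find (\<lambda>(k, j, c). k = i) t of
        None \<Rightarrow> 1 | Some (k, j, c) \<Rightarrow> obs_setting M j) {0..<n}"

definition expval ::
  "nat \<Rightarrow> nat \<Rightarrow> nat \<Rightarrow> ((nat \<Rightarrow> nat) \<Rightarrow> (nat \<Rightarrow> nat) \<Rightarrow> real) \<Rightarrow> (nat \<times> nat \<times> int) list \<Rightarrow> real" where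
  "expval n M d p t =
     (\<Sum>a\<in>outcomes n d. p a (term_setting n M t) *
        of_int ((\<Sum>(k, j, c)\<leftarrow>t. c * (int (a k) + obs_shift M j)) mod int d))"

text \<open>The terms S (with overall sign s) of the explicit formula, for parties
  A^(1..N) (indices 0..N-1) and \<alpha> : {1..N-1} \<rightarrow> {1..M}:
  S = \<Sum>_{k=2}^{N-1} (-1)^(k-1) A^(k)_{\<alpha>_{k-1}+\<alpha>_k-1} + (-1)^(N-1) A^(N)_{\<alpha>_{N-1}}.\<close>
definition S_terms :: "nat \<Rightarrow> (nat \<Rightarrow> nat) \<Rightarrow> int \<Rightarrow> (nat \<times> nat \<times> int) list" where
  "S_terms N \<alpha> s =
     map (\<lambda>k. (k - 1, \<alpha> (k - 1) + \<alpha> k - 1, s * (-1) ^ (k - 1))) [2..<N]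
     @ [(N - 1, \<alpha> (N - 1), s * (-1) ^ (N - 1))]"

definition bellI ::
  "nat \<Rightarrow> nat \<Rightarrow> nat \<Rightarrow> nat \<Rightarrow> ((nat \<Rightarrow> nat) \<Rightarrow> (nat \<Rightarrow> nat) \<Rightarrow> real) \<Rightarrow> real" where
  "bellI n N M d p =
     (1 / real M ^ (N - 2)) *
     (\<Sum>\<alpha>\<in>{1..N-1} \<rightarrow>\<^sub>E {1..M}.
        expval n M d p ((0, \<alpha> 1, 1) # S_terms N \<alpha> 1) +
        expval n M d p ((0, \<alpha> 1 + 1, -1) # S_terms N \<alpha> (-1)))"

end

theory Submission
  imports Defs
begin

text \<open>The Bell expression averages, over the index vectors \<alpha>, pairs of brackets
  \<open>\<langle>[V]\<rangle> + \<langle>[-V']\<rangle>\<close> of alternating sums of observables of the first N parties.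
  Reindexing the second brackets by a shift of the index box makes \<open>V'\<close> differ from \<open>V\<close>
  only in the observable of party k, whose index moves by one; the carries modulo M
  are absorbed by the convention \<open>A_(iM+\<gamma>) = [A_\<gamma> + i]\<close> and cancel in the alternating sum.
  Inserting the observable B of party N+1 into both brackets via \<open>[u + v] \<le> [u] + [v]\<close>,
  nonsignalling bounds each pair below by a difference of correlators of B and party k
  at neighbouring indices.  Since the index of party k is equidistributed modulo M
  over the box, these differences telescope around the cycle of its settings, and
  the two extra brackets complete them to \<open>[w - 1] + [-w] = d - 1\<close>.\<close>

text \<open>\<open>setting_of\<close> and \<open>obs_value\<close> extend \<open>obs_setting\<close> and \<open>obs_shift\<close> to all integer
  indices, making index arithmetic periodic in M.\<close>

definition setting_of :: "nat \<Rightarrow> int \<Rightarrow> nat" where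
  "setting_of M i = nat ((i - 1) mod int M) + 1"

definition obs_value :: "nat \<Rightarrow> nat \<Rightarrow> int \<Rightarrow> (nat \<Rightarrow> nat) \<Rightarrow> int" where
  "obs_value M q i a = int (a q) + (i - 1) div int M"

lemma setting_of_range: "M > 0 \<Longrightarrow> setting_of M i \<in> {1..M}"
proof -
  assume M: "M > 0"
  have "0 \<le> (i - 1) mod int M" "(i - 1) mod int M < int M" using M by auto
  then show ?thesis unfolding setting_of_def by auto
qed

lemma int_setting_of: "M > 0 \<Longrightarrow> int (setting_of M i) = i - int M * ((i - 1) div int M)"
proof -
  assume M: "M > 0"
  have "0 \<le> (i - 1) mod int M" using M by auto
  then have "int (setting_of M i) = (i - 1) mod int M + 1" unfolding setting_of_def by simp
  also have "\<dots> = i - int M * ((i - 1) div int M)"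
    using div_mult_mod_eq[of "i - 1" "int M"] by (simp add: algebra_simps)
  finally show ?thesis .
qed

lemma setting_of_periodic: "setting_of M (i + int M * t) = setting_of M i"
  unfolding setting_of_def by (metis add.commute diff_add_eq mod_mult_self2 mult.commute)

lemma setting_of_int: "v \<in> {1..M} \<Longrightarrow> setting_of M (int v) = v"
  unfolding setting_of_def by (auto simp: zmod_trivial_iff nat_diff_distrib)

lemma setting_of_cancel:
  assumes "M > 0" and "v \<in> {1..M}"
  shows "setting_of M (int (setting_of M (int v + e)) - e) = v"
proof -
  have "int (setting_of M (int v + e)) - e = int v + int M * (- ((int v + e - 1) div int M))"
    using int_setting_of[OF assms(1), of "int v + e"] by simp
  then show ?thesis by (simp only: setting_of_periodic setting_of_int[OF assms(2)])
qed

lemma bij_betw_setting_of_shift: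
  assumes "M > 0"
  shows "bij_betw (\<lambda>v. setting_of M (int v + e)) {1..M} {1..M}"
proof (rule bij_betw_byWitness[where f'="\<lambda>r. setting_of M (int r - e)"])
  show "\<forall>v\<in>{1..M}. setting_of M (int (setting_of M (int v + e)) - e) = v"
    using setting_of_cancel[OF assms] by blast
  show "\<forall>r\<in>{1..M}. setting_of M (int (setting_of M (int r - e)) + e) = r"
    using setting_of_cancel[OF assms, of _ "- e"] by simp
qed (use setting_of_range[OF assms] in blast)+

lemma obs_value_periodic: "M > 0 \<Longrightarrow> obs_value M q (i + int M * t) a = obs_value M q i a + t"
proof -
  assume M: "M > 0"
  have "(i + int M * t - 1) div int M = ((i - 1) + t * int M) div int M"
    by (simp add: algebra_simps)
  also have "\<dots> = t + (i - 1) div int M"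
    by (rule div_mult_self1) (use M in simp)
  finally show ?thesis unfolding obs_value_def by simp
qed

lemma obs_value_int: "v \<in> {1..M} \<Longrightarrow> obs_value M q (int v) a = int (a q)"
  unfolding obs_value_def by (auto simp: div_pos_pos_trivial)

lemma obs_setting_eq_setting_of: "j \<ge> 1 \<Longrightarrow> obs_setting M j = setting_of M (int j)"
  unfolding obs_setting_def setting_of_def by (simp add: nat_mod_distrib of_nat_diff nat_diff_distrib)

lemma obs_shift_eq_obs_value: "j \<ge> 1 \<Longrightarrow> int (a q) + obs_shift M j = obs_value M q (int j) a"
  unfolding obs_shift_def obs_value_def by (simp add: zdiv_int of_nat_diff)

definition bracket :: "nat \<Rightarrow> int \<Rightarrow> real" where
  "bracket d z = of_int (z mod int d)"

lemma bracket_add_le: "d > 0 \<Longrightarrow> bracket d (u + v) \<le> bracket d u + bracket d v"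
proof -
  assume d: "d > 0"
  have "(u + v) mod int d = (u mod int d + v mod int d) mod int d" by (simp add: mod_add_eq)
  also have "\<dots> \<le> u mod int d + v mod int d"
    by (rule zmod_le_nonneg_dividend) (use d in auto)
  finally show ?thesis unfolding bracket_def by linarith
qed

lemma mod_pred_add_mod_neg: "d > 0 \<Longrightarrow> (w - 1) mod int d + (- w) mod int d = int d - 1"
proof -
  assume d: "d > 0"
  have pred: "(w - 1) mod int d = (w mod int d - 1) mod int d" by (simp add: mod_diff_left_eq)
  show ?thesis
  proof (cases "w mod int d = 0")
    case True
    have "(w mod int d - 1) mod int d = int d - 1" using True d by (simp add: zmod_minus1)
    then show ?thesis using True by (simp add: pred zmod_zminus1_eq_if)
  next
    case False
    moreover have "0 \<le> w mod int d" "w mod int d < int d" using d by auto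
    ultimately have "(w mod int d - 1) mod int d = w mod int d - 1"
      by (simp add: mod_pos_pos_trivial)
    then show ?thesis using False by (simp add: pred zmod_zminus1_eq_if)
  qed
qed

lemma bracket_pred_add_bracket_neg: "d > 0 \<Longrightarrow> bracket d (w - 1) + bracket d (- w) = real d - 1"
  using mod_pred_add_mod_neg[of d w] unfolding bracket_def by (metis of_int_add of_int_diff of_int_of_nat_eq of_int_1)

definition expect ::
  "nat \<Rightarrow> nat \<Rightarrow> ((nat \<Rightarrow> nat) \<Rightarrow> (nat \<Rightarrow> nat) \<Rightarrow> real) \<Rightarrow> (nat \<Rightarrow> nat) \<Rightarrow> ((nat \<Rightarrow> nat) \<Rightarrow> real) \<Rightarrow> real"
  where "expect n d p x F = (\<Sum>a\<in>outcomes n d. p a x * F a)"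

lemma finite_outcomes: "finite (outcomes n d)"
  unfolding outcomes_def by (auto intro: finite_PiE)

lemma expect_mono:
  assumes "is_behaviour n M d p" "x \<in> settings n M" "\<And>a. a \<in> outcomes n d \<Longrightarrow> F a \<le> G a"
  shows "expect n d p x F \<le> expect n d p x G"
  unfolding expect_def
proof (rule sum_mono)
  fix a assume a: "a \<in> outcomes n d"
  have "0 \<le> p a x" using assms(1,2) a unfolding is_behaviour_def by auto
  then show "p a x * F a \<le> p a x * G a" using assms(3)[OF a] by (simp add: mult_left_mono)
qed

lemma expect_diff: "expect n d p x (\<lambda>a. F a - G a) = expect n d p x F - expect n d p x G"
  unfolding expect_def by (simp add: right_diff_distrib sum_subtractf)

lemma expect_add: "expect n d p x (\<lambda>a. F a + G a) = expect n d p x F + expect n d p x G"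
  unfolding expect_def by (simp add: distrib_left sum.distrib)

lemma expect_const:
  assumes "is_behaviour n M d p" "x \<in> settings n M"
  shows "expect n d p x (\<lambda>a. c) = c"
proof -
  have "(\<Sum>a\<in>outcomes n d. p a x) = 1" using assms unfolding is_behaviour_def by auto
  then show ?thesis unfolding expect_def by (simp add: sum_distrib_right[symmetric])
qed

text \<open>Grouping the outcomes by their restriction to S expresses the expectation
  through the marginals of S.\<close>

lemma expect_nonsignalling:
  assumes ns: "nonsignalling n M d p" and S: "S \<subseteq> {0..<n}"
    and x: "x \<in> settings n M" and x': "x' \<in> settings n M"
    and agree: "\<forall>i\<in>S. x i = x' i"
    and F: "\<And>a b. a \<in> outcomes n d \<Longrightarrow> b \<in> outcomes n d \<Longrightarrow> \<forall>i\<in>S. a i = b i \<Longrightarrow> F a = F b"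
  shows "expect n d p x F = expect n d p x' F"
proof -
  define fibre where "fibre a = {b \<in> outcomes n d. \<forall>i\<in>S. b i = a i}" for a
  have grouped: "expect n d p z F =
      (\<Sum>u\<in>(\<lambda>a. restrict a S) ` outcomes n d.
         \<Sum>a\<in>{a \<in> outcomes n d. restrict a S = u}. p a z * F a)" for z
    unfolding expect_def by (rule sum.image_gen[OF finite_outcomes])
  have group: "(\<Sum>a\<in>{a \<in> outcomes n d. restrict a S = restrict a0 S}. p a z * F a)
      = F a0 * (\<Sum>b\<in>fibre a0. p b z)" if a0: "a0 \<in> outcomes n d" for a0 z
  proof -
    have "{a \<in> outcomes n d. restrict a S = restrict a0 S} = fibre a0"
      unfolding fibre_def by (auto simp: restrict_def fun_eq_iff)
    moreover have "F a = F a0" if "a \<in> fibre a0" for a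
      using that a0 F unfolding fibre_def by blast
    ultimately show ?thesis by (simp add: sum_distrib_left mult.commute)
  qed
  have marginal: "(\<Sum>b\<in>fibre a0. p b x) = (\<Sum>b\<in>fibre a0. p b x')" if "a0 \<in> outcomes n d" for a0
    using ns S x x' agree that unfolding nonsignalling_def fibre_def by blast
  show ?thesis
    unfolding grouped by (rule sum.cong) (auto simp: group marginal)
qed

lemma find_append: "find P (xs @ ys) = (case find P xs of None \<Rightarrow> find P ys | Some x \<Rightarrow> Some x)"
  by (induction xs) auto

lemma find_party_map_upt:
  "find (\<lambda>(k, j, c). k = i) (map (\<lambda>m. (m, J m, C m)) [0..<N]) =
     (if i < N then Some (i, J i, C i) else None)"
  by (induction N) (auto simp: find_append less_Suc_eq)

lemma sum_list_map_upt:
  "(\<Sum>(k, j, c)\<leftarrow>map (\<lambda>m. (m, J m, C m)) [0..<N]. f k j c) = (\<Sum>m<N. f m (J m) (C m))"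
  by (induction N) auto

definition alt_obs_sum :: "nat \<Rightarrow> nat \<Rightarrow> (nat \<Rightarrow> int) \<Rightarrow> (nat \<Rightarrow> nat) \<Rightarrow> int" where
  "alt_obs_sum N M J a = (\<Sum>m<N. (-1)^m * obs_value M m (J m) a)"

definition chain_settings :: "nat \<Rightarrow> nat \<Rightarrow> nat \<Rightarrow> (nat \<Rightarrow> int) \<Rightarrow> nat \<Rightarrow> nat" where
  "chain_settings N M y J = restrict (\<lambda>i. if i < N then setting_of M (J i) else y) {0..<Suc N}"

lemma chain_settings_in_settings:
  "M > 0 \<Longrightarrow> y \<in> {1..M} \<Longrightarrow> chain_settings N M y J \<in> settings (Suc N) M"
  unfolding chain_settings_def settings_def using setting_of_range by auto

lemma chain_settings_cong:
  "(\<And>m. m < N \<Longrightarrow> J m = J' m) \<Longrightarrow> chain_settings N M y J = chain_settings N M y J'"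
  unfolding chain_settings_def by (intro restrict_ext) auto

lemma chain_settings_periodic:
  "chain_settings N M y (\<lambda>m. J m - int M * t m) = chain_settings N M y J"
proof -
  have "setting_of M (J m - int M * t m) = setting_of M (J m)" for m
    using setting_of_periodic[of M "J m" "- t m"] by simp
  then show ?thesis unfolding chain_settings_def by (simp only:)
qed

lemma alt_obs_sum_cong:
  "(\<And>m. m < N \<Longrightarrow> J m = J' m) \<Longrightarrow> alt_obs_sum N M J a = alt_obs_sum N M J' a"
  unfolding alt_obs_sum_def by (intro sum.cong) auto

text \<open>Carries between neighbouring parties cancel because of the alternating signs.\<close>

lemma alt_obs_sum_carry:
  assumes M: "M > 0" and "t 0 = 0" and "t N = 0"
  shows "alt_obs_sum N M (\<lambda>m. J m - int M * (t m + t (Suc m))) a = alt_obs_sum N M J a"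
proof -
  have shift: "obs_value M m (J m - int M * (t m + t (Suc m))) a
      = obs_value M m (J m) a - (t m + t (Suc m))" for m
    using obs_value_periodic[OF M, of m "J m" "- (t m + t (Suc m))" a]
    by (simp add: algebra_simps)
  define u where "u m = (-1::int)^m * t m" for m
  have "(\<Sum>m<N. (-1::int)^m * (t m + t (Suc m))) = (\<Sum>m<N. u m - u (Suc m))"
    unfolding u_def by (intro sum.cong) (auto simp: algebra_simps)
  also have "\<dots> = 0"
    unfolding sum_lessThan_telescope' using assms(2,3) by (simp add: u_def)
  finally have "(\<Sum>m<N. (-1::int)^m * (t m + t (Suc m))) = 0" .
  then show ?thesis
    unfolding alt_obs_sum_def shift by (simp add: right_diff_distrib sum_subtractf)
qed

lemma expval_alternating:
  assumes M: "M > 0" and ns: "nonsignalling (Suc N) M d p"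
    and y: "y \<in> {1..M}" and J: "\<And>m. m < N \<Longrightarrow> J m \<ge> 1"
  shows "expval (Suc N) M d p (map (\<lambda>m. (m, J m, s * (-1)^m)) [0..<N])
       = expect (Suc N) d p (chain_settings N M y (\<lambda>m. int (J m)))
           (\<lambda>a. bracket d (s * alt_obs_sum N M (\<lambda>m. int (J m)) a))"
proof -
  define x0 where "x0 = restrict (\<lambda>i. if i < N then obs_setting M (J i) else 1) {0..<Suc N}"
  have setting: "term_setting (Suc N) M (map (\<lambda>m. (m, J m, s * (-1)^m)) [0..<N]) = x0"
    unfolding term_setting_def x0_def by (rule restrict_ext) (simp add: find_party_map_upt)
  have sum_eq: "(\<Sum>m<N. (s * (-1)^m) * (int (a m) + obs_shift M (J m)))
      = s * alt_obs_sum N M (\<lambda>m. int (J m)) a" for a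
    unfolding alt_obs_sum_def sum_distrib_left
  proof (rule sum.cong[OF refl])
    fix m assume "m \<in> {..<N}"
    then have "int (a m) + obs_shift M (J m) = obs_value M m (int (J m)) a"
      using J by (intro obs_shift_eq_obs_value) auto
    then show "s * (-1)^m * (int (a m) + obs_shift M (J m)) = s * ((-1)^m * obs_value M m (int (J m)) a)"
      by simp
  qed
  have "expval (Suc N) M d p (map (\<lambda>m. (m, J m, s * (-1)^m)) [0..<N])
      = expect (Suc N) d p x0 (\<lambda>a. bracket d (s * alt_obs_sum N M (\<lambda>m. int (J m)) a))"
    unfolding expval_def expect_def bracket_def setting sum_list_map_upt sum_eq by simp
  also have "\<dots> = expect (Suc N) d p (chain_settings N M y (\<lambda>m. int (J m)))
      (\<lambda>a. bracket d (s * alt_obs_sum N M (\<lambda>m. int (J m)) a))"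
  proof (rule expect_nonsignalling[OF ns, of "{0..<N}"])
    show "x0 \<in> settings (Suc N) M"
      unfolding x0_def settings_def obs_setting_def using M by (auto simp: Suc_le_eq)
    show "\<forall>i\<in>{0..<N}. x0 i = chain_settings N M y (\<lambda>m. int (J m)) i"
      using J unfolding x0_def chain_settings_def by (simp add: obs_setting_eq_setting_of)
    show "bracket d (s * alt_obs_sum N M (\<lambda>m. int (J m)) a)
        = bracket d (s * alt_obs_sum N M (\<lambda>m. int (J m)) b)"
      if "\<forall>i\<in>{0..<N}. a i = b i" for a b
    proof -
      have "alt_obs_sum N M (\<lambda>m. int (J m)) a = alt_obs_sum N M (\<lambda>m. int (J m)) b"
        using that unfolding alt_obs_sum_def obs_value_def by (intro sum.cong) auto
      then show ?thesis by simp
    qed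
  qed (auto intro: chain_settings_in_settings[OF M y])
  finally show ?thesis .
qed

text \<open>The observable indices of party m in the two brackets
  \<open>\<langle>[A\<^sup>(\<^sup>1\<^sup>)\<^sub>\<alpha>\<^sub>1 + S]\<rangle>\<close> and \<open>\<langle>[-A\<^sup>(\<^sup>1\<^sup>)\<^sub>\<alpha>\<^sub>1\<^sub>+\<^sub>1 - S]\<rangle>\<close> of the Bell expression
  (parties indexed from 0).\<close>

definition bell_index_pos :: "nat \<Rightarrow> (nat \<Rightarrow> nat) \<Rightarrow> nat \<Rightarrow> nat" where
  "bell_index_pos N \<alpha> m =
     (if m = 0 then \<alpha> 1 else if m = N - 1 then \<alpha> (N - 1) else \<alpha> m + \<alpha> (Suc m) - 1)"

definition bell_index_neg :: "nat \<Rightarrow> (nat \<Rightarrow> nat) \<Rightarrow> nat \<Rightarrow> nat" where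
  "bell_index_neg N \<alpha> m = (if m = 0 then \<alpha> 1 + 1 else bell_index_pos N \<alpha> m)"

lemma S_terms_eq_map:
  assumes "N \<ge> 2"
  shows "S_terms N \<alpha> s = map (\<lambda>m. (m, bell_index_pos N \<alpha> m, s * (-1)^m)) [1..<N]"
proof -
  obtain K where K: "N = Suc (Suc K)" using assms by (metis add_2_eq_Suc le_Suc_ex)
  have "[2..<N] = map Suc [1..<N - 1]" using assms by (simp add: map_Suc_upt numeral_2_eq_2)
  moreover have "[1..<N] = [1..<N - 1] @ [N - 1]" using K by simp
  ultimately show ?thesis
    unfolding S_terms_def using assms by (auto simp: bell_index_pos_def)
qed

lemma bell_terms_pos:
  "N \<ge> 2 \<Longrightarrow> (0, \<alpha> 1, 1) # S_terms N \<alpha> 1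
     = map (\<lambda>m. (m, bell_index_pos N \<alpha> m, 1 * (-1)^m)) [0..<N]"
  by (simp add: S_terms_eq_map upt_conv_Cons bell_index_pos_def)

lemma bell_terms_neg:
  "N \<ge> 2 \<Longrightarrow> (0, \<alpha> 1 + 1, -1) # S_terms N \<alpha> (-1)
     = map (\<lambda>m. (m, bell_index_neg N \<alpha> m, (-1) * (-1)^m)) [0..<N]"
  by (simp add: S_terms_eq_map upt_conv_Cons bell_index_neg_def cong: map_cong)

lemma bell_index_pos_ge_1:
  assumes "\<alpha> \<in> {1..N-1} \<rightarrow>\<^sub>E {1..M}" "N \<ge> 2" "m < N"
  shows "bell_index_pos N \<alpha> m \<ge> 1"
proof -
  have range: "\<alpha> i \<ge> 1" if "i \<in> {1..N-1}" for i using PiE_mem[OF assms(1) that] by auto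
  then have "\<alpha> 1 \<ge> 1" "\<alpha> (N - 1) \<ge> 1" using assms(2) by auto
  moreover have "\<alpha> m \<ge> 1 \<and> \<alpha> (Suc m) \<ge> 1" if "m \<noteq> 0" "m \<noteq> N - 1"
    using that assms(3) range by auto
  ultimately show ?thesis unfolding bell_index_pos_def by auto
qed

lemma bell_index_neg_ge_1:
  "\<alpha> \<in> {1..N-1} \<rightarrow>\<^sub>E {1..M} \<Longrightarrow> N \<ge> 2 \<Longrightarrow> m < N \<Longrightarrow> bell_index_neg N \<alpha> m \<ge> 1"
  using bell_index_pos_ge_1 unfolding bell_index_neg_def by auto

lemma bij_betw_shift_box:
  assumes "M > 0"
  shows "bij_betw (\<lambda>\<alpha>. restrict (\<lambda>i. setting_of M (int (\<alpha> i) + e i)) I)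
           (I \<rightarrow>\<^sub>E {1..M}) (I \<rightarrow>\<^sub>E {1..M})"
    (is "bij_betw (?shift e) _ _")
proof (rule bij_betw_byWitness[where f'="?shift (\<lambda>i. - e i)"])
  show "\<forall>\<alpha>\<in>I \<rightarrow>\<^sub>E {1..M}. ?shift (\<lambda>i. - e i) (?shift e \<alpha>) = \<alpha>"
    using setting_of_cancel[OF assms] by (auto simp: PiE_def Pi_def extensional_def fun_eq_iff)
  show "\<forall>\<alpha>\<in>I \<rightarrow>\<^sub>E {1..M}. ?shift e (?shift (\<lambda>i. - e i) \<alpha>) = \<alpha>"
    using setting_of_cancel[OF assms, of _ "- e _"] by (auto simp: PiE_def Pi_def extensional_def fun_eq_iff)
qed (use setting_of_range[OF assms] in auto)

text \<open>Telescoping around the cycle of M settings: the jump of the offset c at x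
  compensates the wrap-around from M to 1.\<close>

lemma periodic_telescope_up:
  fixes h :: "int \<Rightarrow> int \<Rightarrow> real"
  assumes per: "\<And>z c. h (z + int M) (c + 1) = h z c" and x: "x \<in> {1..M}"
  shows "(\<Sum>r\<in>{1..M}. h (int r + 1) (if r < x then -1 else 0) - h (int r) (if r < x then -1 else 0))
       = h (int x) (-1) - h (int x) 0"
proof -
  define f where "f r = h (int r + 1) (if r < x then -1 else 0) - h (int r) (if r < x then -1 else 0)" for r
  define F1 where "F1 r = h (int r) (-1)" for r
  define F0 where "F0 r = h (int r) 0" for r
  have x1: "1 \<le> x" "x \<le> Suc M" using x by auto
  have "(\<Sum>r\<in>{1..M}. f r) = (\<Sum>r\<in>{1..<x}. f r) + (\<Sum>r\<in>{x..<Suc M}. f r)"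
    using sum.atLeastLessThan_concat[OF x1, of f] by (simp add: atLeastLessThanSuc_atLeastAtMost)
  also have "(\<Sum>r\<in>{1..<x}. f r) = (\<Sum>r\<in>{1..<x}. F1 (Suc r) - F1 r)"
    by (rule sum.cong) (auto simp: f_def F1_def add.commute)
  also have "\<dots> = F1 x - F1 1" using sum_Suc_diff'[OF x1(1)] .
  also have "(\<Sum>r\<in>{x..<Suc M}. f r) = (\<Sum>r\<in>{x..<Suc M}. F0 (Suc r) - F0 r)"
    by (rule sum.cong) (auto simp: f_def F0_def add.commute)
  also have "\<dots> = F0 (Suc M) - F0 x" using sum_Suc_diff'[OF x1(2)] .
  also have "F0 (Suc M) = F1 1"
    unfolding F0_def F1_def using per[of 1 "-1"] by (simp add: add.commute)
  finally show ?thesis unfolding f_def F1_def F0_def by simp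
qed

lemma periodic_telescope_down:
  fixes h :: "int \<Rightarrow> int \<Rightarrow> real"
  assumes per: "\<And>z c. h (z + int M) (c + 1) = h z c" and x: "x \<in> {1..M}"
  shows "(\<Sum>r\<in>{1..M}. h (int r - 1) (if r \<le> x then 0 else 1) - h (int r) (if r \<le> x then 0 else 1))
       = h (int x) 1 - h (int x) 0"
proof -
  define f where "f r = h (int r - 1) (if r \<le> x then 0 else 1) - h (int r) (if r \<le> x then 0 else 1)" for r
  define G1 where "G1 r = h (int r) 1" for r
  define G0 where "G0 r = h (int r) 0" for r
  have x1: "1 \<le> Suc x" "Suc x \<le> Suc M" and xM: "x \<le> M" using x by auto
  have "(\<Sum>r\<in>{1..M}. f r) = (\<Sum>r\<in>{1..<Suc x}. f r) + (\<Sum>r\<in>{Suc x..<Suc M}. f r)"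
    using sum.atLeastLessThan_concat[OF x1, of f] by (simp add: atLeastLessThanSuc_atLeastAtMost)
  also have "(\<Sum>r\<in>{1..<Suc x}. f r) = (\<Sum>i\<in>{0..<x}. f (Suc i))"
    using sum.shift_bounds_Suc_ivl[of f 0 x] by simp
  also have "\<dots> = (\<Sum>i\<in>{0..<x}. - (G0 (Suc i) - G0 i))"
    by (rule sum.cong) (auto simp: f_def G0_def)
  also have "\<dots> = G0 0 - G0 x" by (simp only: sum_negf sum_Suc_diff'[OF le0])
  also have "(\<Sum>r\<in>{Suc x..<Suc M}. f r) = (\<Sum>i\<in>{x..<M}. f (Suc i))"
    using sum.shift_bounds_Suc_ivl[of f x M] by simp
  also have "\<dots> = (\<Sum>i\<in>{x..<M}. - (G1 (Suc i) - G1 i))"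
    by (rule sum.cong) (auto simp: f_def G1_def)
  also have "\<dots> = G1 x - G1 M" by (simp only: sum_negf sum_Suc_diff'[OF xM])
  also have "G0 0 = G1 M"
    unfolding G0_def G1_def using per[of 0 0] by simp
  finally show ?thesis unfolding f_def G1_def G0_def by simp
qed

lemma sum_PiE_insert:
  assumes "i \<notin> I"
  shows "(\<Sum>\<alpha>\<in>insert i I \<rightarrow>\<^sub>E A. f \<alpha>) = (\<Sum>g\<in>I \<rightarrow>\<^sub>E A. \<Sum>v\<in>A. f (g(i := v)))"
proof -
  have "inj_on (\<lambda>(v, g). g(i := v)) (A \<times> (I \<rightarrow>\<^sub>E A))"
    using inj_combinator[OF assms, of "\<lambda>_. A"] by simp
  then have "(\<Sum>\<alpha>\<in>insert i I \<rightarrow>\<^sub>E A. f \<alpha>) = (\<Sum>(v, g)\<in>A \<times> (I \<rightarrow>\<^sub>E A). f (g(i := v)))"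
    unfolding PiE_insert_eq by (simp add: sum.reindex case_prod_unfold)
  also have "\<dots> = (\<Sum>v\<in>A. \<Sum>g\<in>I \<rightarrow>\<^sub>E A. f (g(i := v)))"
    by (rule sum.cartesian_product[symmetric])
  finally show ?thesis by (rule trans) (rule sum.swap)
qed

locale bell_scenario =
  fixes N M d k y :: nat and p :: "(nat \<Rightarrow> nat) \<Rightarrow> (nat \<Rightarrow> nat) \<Rightarrow> real"
  assumes N_ge_2: "N \<ge> 2" and M_pos: "M > 0" and d_pos: "d > 0"
    and behaviour: "is_behaviour (Suc N) M d p" and no_signalling: "nonsignalling (Suc N) M d p"
    and party: "k < N" and setting: "y \<in> {1..M}"
begin

abbreviation index_box :: "(nat \<Rightarrow> nat) set" where
  "index_box \<equiv> {1..N-1} \<rightarrow>\<^sub>E {1..M}"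

definition pos_index :: "(nat \<Rightarrow> nat) \<Rightarrow> nat \<Rightarrow> int" where
  "pos_index \<alpha> = (\<lambda>m. int (bell_index_pos N \<alpha> m))"

definition neg_index :: "(nat \<Rightarrow> nat) \<Rightarrow> nat \<Rightarrow> int" where
  "neg_index \<alpha> = (\<lambda>m. int (bell_index_neg N \<alpha> m))"

text \<open>The shift \<open>\<delta>\<close> of the index box is chosen so that \<open>\<delta> m + \<delta> (m + 1)\<close> vanishes
  except at \<open>m = k\<close>: after shifting, the negative indices agree with the positive ones
  up to carries, except that the index of party k moves by \<open>(-1)\<^sup>k\<close>.\<close>

definition delta :: "nat \<Rightarrow> int" where
  "delta i = (if i \<le> k then (-1)^i else 0)"

definition shift_box :: "(nat \<Rightarrow> nat) \<Rightarrow> nat \<Rightarrow> nat" where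
  "shift_box \<alpha> = restrict (\<lambda>i. setting_of M (int (\<alpha> i) + delta i)) {1..N-1}"

definition carry :: "(nat \<Rightarrow> nat) \<Rightarrow> nat \<Rightarrow> int" where
  "carry \<alpha> i = (if i \<in> {1..N-1} then (int (\<alpha> i) + delta i - 1) div int M else 0)"

lemma shift_box_in_index_box: "shift_box \<alpha> \<in> index_box"
  unfolding shift_box_def using setting_of_range[OF M_pos] by auto

lemma bij_betw_shift_box_index_box: "bij_betw shift_box index_box index_box"
  unfolding shift_box_def by (rule bij_betw_shift_box[OF M_pos])

lemma int_shift_box:
  "i \<in> {1..N-1} \<Longrightarrow> int (shift_box \<alpha> i) = int (\<alpha> i) + delta i - int M * carry \<alpha> i"
  unfolding shift_box_def carry_def using int_setting_of[OF M_pos] by auto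

lemma neg_index_shift_box:
  assumes \<alpha>: "\<alpha> \<in> index_box" and m: "m < N"
  shows "neg_index (shift_box \<alpha>) m
       = pos_index \<alpha> m + (if m = k then (-1)^k else 0) - int M * (carry \<alpha> m + carry \<alpha> (Suc m))"
proof -
  have ge_1: "\<alpha> i \<ge> 1" "shift_box \<alpha> i \<ge> 1" if "i \<in> {1..N-1}" for i
    using PiE_mem[OF \<alpha> that] PiE_mem[OF shift_box_in_index_box that] by auto
  have "carry \<alpha> 0 = 0" "carry \<alpha> N = 0" unfolding carry_def using N_ge_2 by auto
  consider (first) "m = 0" | (last) "m \<noteq> 0" "m = N - 1" | (middle) "m \<noteq> 0" "m \<noteq> N - 1" by blast
  then show ?thesis
  proof cases
    case first
    moreover have "1 \<in> {1..N-1}" using N_ge_2 by auto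
    moreover have "delta 1 + 1 = (if m = k then (-1)^k else 0)"
      using first unfolding delta_def by auto
    ultimately show ?thesis using \<open>carry \<alpha> 0 = 0\<close> int_shift_box[of 1 \<alpha>]
      unfolding neg_index_def pos_index_def bell_index_neg_def bell_index_pos_def by simp
  next
    case last
    moreover have "N - 1 \<in> {1..N-1}" using N_ge_2 by auto
    moreover have "delta (N - 1) = (if m = k then (-1)^k else 0)"
      using last party unfolding delta_def by auto
    moreover have "Suc m = N" using last N_ge_2 by simp
    ultimately show ?thesis using \<open>carry \<alpha> N = 0\<close> int_shift_box[of "N - 1" \<alpha>]
      unfolding neg_index_def pos_index_def bell_index_neg_def bell_index_pos_def by simp
  next
    case middle
    have i: "m \<in> {1..N-1}" "Suc m \<in> {1..N-1}" using middle m by auto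
    have "neg_index (shift_box \<alpha>) m = int (shift_box \<alpha> m) + int (shift_box \<alpha> (Suc m)) - 1"
      using middle ge_1(2)[OF i(1)]
      unfolding neg_index_def bell_index_neg_def bell_index_pos_def by (simp add: of_nat_diff)
    also have "\<dots> = int (\<alpha> m) + int (\<alpha> (Suc m)) - 1 + (delta m + delta (Suc m))
        - int M * (carry \<alpha> m + carry \<alpha> (Suc m))"
      using int_shift_box[OF i(1), of \<alpha>] int_shift_box[OF i(2), of \<alpha>] by (simp add: algebra_simps)
    also have "int (\<alpha> m) + int (\<alpha> (Suc m)) - 1 = pos_index \<alpha> m"
      using middle ge_1(1)[OF i(1)] unfolding pos_index_def bell_index_pos_def by (simp add: of_nat_diff)
    also have "delta m + delta (Suc m) = (if m = k then (-1)^k else 0)"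
      unfolding delta_def by auto
    finally show ?thesis .
  qed
qed

definition pair_settings :: "int \<Rightarrow> nat \<Rightarrow> nat" where
  "pair_settings z = restrict (\<lambda>q. if q = k then setting_of M z else if q = N then y else 1) {0..<Suc N}"

definition pair_corr :: "int \<Rightarrow> int \<Rightarrow> real" where
  "pair_corr z c = expect (Suc N) d p (pair_settings z)
     (\<lambda>a. bracket d ((-1)^k * (int (a N) + c) - (-1)^k * obs_value M k z a))"

lemma pair_settings_in_settings: "pair_settings z \<in> settings (Suc N) M"
  unfolding pair_settings_def settings_def using setting_of_range[OF M_pos] setting M_pos by auto

lemma pair_corr_periodic: "pair_corr (z + int M * t) (c + t) = pair_corr z c"
proof -
  have "(-1)^k * (int (a N) + (c + t)) - (-1)^k * obs_value M k (z + int M * t) a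
      = (-1)^k * (int (a N) + c) - (-1)^k * obs_value M k z a" for a
    unfolding obs_value_periodic[OF M_pos] by (simp add: algebra_simps)
  then show ?thesis unfolding pair_corr_def pair_settings_def setting_of_periodic by simp
qed

lemma expect_chain_settings_pair:
  "expect (Suc N) d p (chain_settings N M y J)
     (\<lambda>a. bracket d ((-1)^k * (int (a N) + c) - (-1)^k * obs_value M k (J k) a))
   = pair_corr (J k) c"
  unfolding pair_corr_def
proof (rule expect_nonsignalling[OF no_signalling, of "{k, N}"])
  show "chain_settings N M y J \<in> settings (Suc N) M"
    by (rule chain_settings_in_settings[OF M_pos setting])
  show "\<forall>i\<in>{k, N}. chain_settings N M y J i = pair_settings (J k) i"
    using party unfolding chain_settings_def pair_settings_def by auto
qed (use party pair_settings_in_settings in \<open>auto simp: obs_value_def\<close>)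

text \<open>The key estimate: insert \<open>s (B + c)\<close>, with B the outcome of the last party and
  \<open>s = (-1)\<^sup>k\<close>, into both brackets by the triangle inequality; the remaining parts
  \<open>[s (B + c) + R]\<close> do not involve party k, so nonsignalling makes them cancel.\<close>

lemma chain_pair_bound:
  fixes J :: "nat \<Rightarrow> int"
  defines "J' \<equiv> J(k := J k + (-1)^k)"
  shows "expect (Suc N) d p (chain_settings N M y J) (\<lambda>a. bracket d (alt_obs_sum N M J a))
       + expect (Suc N) d p (chain_settings N M y J') (\<lambda>a. bracket d (- alt_obs_sum N M J' a))
       \<ge> pair_corr (J k + (-1)^k) c - pair_corr (J k) c"
proof -
  define s :: int where "s = (-1)^k"
  define R where "R a = (\<Sum>m\<in>{..<N} - {k}. (-1)^m * obs_value M m (J m) a)" for a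
  define B where "B a = int (a N) + c" for a :: "nat \<Rightarrow> nat"
  define E where "E K F = expect (Suc N) d p (chain_settings N M y K) F" for K F
  have k: "k \<in> {..<N}" using party by simp
  have split: "alt_obs_sum N M K a = s * obs_value M k (K k) a + R a"
    if "\<And>m. m \<noteq> k \<Longrightarrow> K m = J m" for K a
  proof -
    have "R a = (\<Sum>m\<in>{..<N} - {k}. (-1)^m * obs_value M m (K m) a)"
      unfolding R_def using that by (intro sum.cong) auto
    then show ?thesis
      unfolding alt_obs_sum_def s_def using sum.remove[OF finite_lessThan k] by simp
  qed
  have settings: "chain_settings N M y K \<in> settings (Suc N) M" for K
    by (rule chain_settings_in_settings[OF M_pos setting])
  have lower: "E J (\<lambda>a. bracket d (alt_obs_sum N M J a))
      \<ge> E J (\<lambda>a. bracket d (s * B a + R a)) - E J (\<lambda>a. bracket d (s * B a - s * obs_value M k (J k) a))"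
    unfolding E_def expect_diff[symmetric]
  proof (rule expect_mono[OF behaviour settings])
    fix a
    have "bracket d (s * B a + R a)
        = bracket d (alt_obs_sum N M J a + (s * B a - s * obs_value M k (J k) a))"
      using split[of J a] by (simp add: algebra_simps)
    also have "\<dots> \<le> bracket d (alt_obs_sum N M J a) + bracket d (s * B a - s * obs_value M k (J k) a)"
      by (rule bracket_add_le[OF d_pos])
    finally show "bracket d (s * B a + R a) - bracket d (s * B a - s * obs_value M k (J k) a)
        \<le> bracket d (alt_obs_sum N M J a)" by simp
  qed
  have lower': "E J' (\<lambda>a. bracket d (- alt_obs_sum N M J' a))
      \<ge> E J' (\<lambda>a. bracket d (s * B a - s * obs_value M k (J' k) a)) - E J' (\<lambda>a. bracket d (s * B a + R a))"
    unfolding E_def expect_diff[symmetric]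
  proof (rule expect_mono[OF behaviour settings])
    fix a
    have "bracket d (s * B a - s * obs_value M k (J' k) a)
        = bracket d (- alt_obs_sum N M J' a + (s * B a + R a))"
      using split[of J' a] by (simp add: J'_def algebra_simps)
    also have "\<dots> \<le> bracket d (- alt_obs_sum N M J' a) + bracket d (s * B a + R a)"
      by (rule bracket_add_le[OF d_pos])
    finally show "bracket d (s * B a - s * obs_value M k (J' k) a) - bracket d (s * B a + R a)
        \<le> bracket d (- alt_obs_sum N M J' a)" by simp
  qed
  have common: "E J (\<lambda>a. bracket d (s * B a + R a)) = E J' (\<lambda>a. bracket d (s * B a + R a))"
    unfolding E_def
  proof (rule expect_nonsignalling[OF no_signalling, of "{0..<Suc N} - {k}"])
    show "\<forall>i\<in>{0..<Suc N} - {k}. chain_settings N M y J i = chain_settings N M y J' i"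
      unfolding chain_settings_def J'_def by auto
    show "bracket d (s * B a + R a) = bracket d (s * B a' + R a')"
      if "\<forall>i\<in>{0..<Suc N} - {k}. a i = a' i" for a a'
    proof -
      have "B a = B a'" unfolding B_def using that party by simp
      moreover have "R a = R a'" unfolding R_def obs_value_def using that by (intro sum.cong) auto
      ultimately show ?thesis by simp
    qed
  qed (auto intro: settings)
  have "E J (\<lambda>a. bracket d (s * B a - s * obs_value M k (J k) a)) = pair_corr (J k) c"
    "E J' (\<lambda>a. bracket d (s * B a - s * obs_value M k (J' k) a)) = pair_corr (J k + (-1)^k) c"
    unfolding E_def s_def B_def expect_chain_settings_pair by (simp_all add: J'_def)
  with lower lower' common show ?thesis unfolding E_def by linarith
qed

abbreviation pos_term :: "(nat \<Rightarrow> nat) \<Rightarrow> real" where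
  "pos_term \<alpha> \<equiv> expval (Suc N) M d p ((0, \<alpha> 1, 1) # S_terms N \<alpha> 1)"

abbreviation neg_term :: "(nat \<Rightarrow> nat) \<Rightarrow> real" where
  "neg_term \<alpha> \<equiv> expval (Suc N) M d p ((0, \<alpha> 1 + 1, -1) # S_terms N \<alpha> (-1))"

lemma pos_term_eq:
  assumes "\<alpha> \<in> index_box"
  shows "pos_term \<alpha> = expect (Suc N) d p (chain_settings N M y (pos_index \<alpha>))
           (\<lambda>a. bracket d (alt_obs_sum N M (pos_index \<alpha>) a))"
  using expval_alternating[OF M_pos no_signalling setting, of "bell_index_pos N \<alpha>" 1]
    bell_index_pos_ge_1[OF assms N_ge_2]
  unfolding bell_terms_pos[OF N_ge_2] pos_index_def by simp

lemma neg_term_shift_box: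
  assumes \<alpha>: "\<alpha> \<in> index_box"
  defines "J' \<equiv> (pos_index \<alpha>)(k := pos_index \<alpha> k + (-1)^k)"
  shows "neg_term (shift_box \<alpha>) = expect (Suc N) d p (chain_settings N M y J')
           (\<lambda>a. bracket d (- alt_obs_sum N M J' a))"
proof -
  define t where "t m = carry \<alpha> m + carry \<alpha> (Suc m)" for m
  have neg: "neg_index (shift_box \<alpha>) m = J' m - int M * t m" if "m < N" for m
    using neg_index_shift_box[OF \<alpha> that] unfolding J'_def t_def by auto
  have "chain_settings N M y (neg_index (shift_box \<alpha>)) = chain_settings N M y J'"
    using chain_settings_cong[OF neg] chain_settings_periodic by simp
  moreover have "alt_obs_sum N M (neg_index (shift_box \<alpha>)) a = alt_obs_sum N M J' a" for a
  proof -
    have "carry \<alpha> 0 = 0" "carry \<alpha> N = 0" unfolding carry_def using N_ge_2 by auto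
    then show ?thesis
      using alt_obs_sum_cong[OF neg] alt_obs_sum_carry[OF M_pos, of "carry \<alpha>"] unfolding t_def by simp
  qed
  moreover have "neg_term (shift_box \<alpha>) = expect (Suc N) d p (chain_settings N M y (neg_index (shift_box \<alpha>)))
      (\<lambda>a. bracket d ((-1) * alt_obs_sum N M (neg_index (shift_box \<alpha>)) a))"
    using expval_alternating[OF M_pos no_signalling setting, of "bell_index_neg N (shift_box \<alpha>)" "-1"]
      bell_index_neg_ge_1[OF shift_box_in_index_box N_ge_2]
    unfolding bell_terms_neg[OF N_ge_2] neg_index_def by simp
  ultimately show ?thesis by simp
qed

text \<open>The offsets are chosen so that the steps telescope over the settings of party k.\<close>

definition offset :: "nat \<Rightarrow> nat \<Rightarrow> int" where
  "offset x r = (if even k then (if r < x then -1 else 0) else (if r \<le> x then 0 else 1))"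

definition pair_step :: "nat \<Rightarrow> nat \<Rightarrow> real" where
  "pair_step x r = pair_corr (int r + (-1)^k) (offset x r) - pair_corr (int r) (offset x r)"

lemma pos_term_add_neg_term_shift_box:
  assumes \<alpha>: "\<alpha> \<in> index_box"
  shows "pos_term \<alpha> + neg_term (shift_box \<alpha>) \<ge> pair_step x (setting_of M (pos_index \<alpha> k))"
proof -
  define r where "r = setting_of M (pos_index \<alpha> k)"
  define t where "t = (pos_index \<alpha> k - 1) div int M"
  have z: "pos_index \<alpha> k = int r + int M * t"
    unfolding r_def t_def using int_setting_of[OF M_pos, of "pos_index \<alpha> k"] by simp
  have "pair_step x r = pair_corr (pos_index \<alpha> k + (-1)^k) (offset x r + t)
      - pair_corr (pos_index \<alpha> k) (offset x r + t)"
    unfolding pair_step_def z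
    using pair_corr_periodic[of "int r + (-1)^k" t "offset x r"] pair_corr_periodic[of "int r" t "offset x r"]
    by (simp add: algebra_simps)
  also have "\<dots> \<le> pos_term \<alpha> + neg_term (shift_box \<alpha>)"
    unfolding pos_term_eq[OF \<alpha>] neg_term_shift_box[OF \<alpha>] by (rule chain_pair_bound)
  finally show ?thesis unfolding r_def .
qed

text \<open>The index of party k is the coordinate \<open>\<alpha> (max 1 k)\<close> plus a shift independent of
  it, hence equidistributed modulo M.\<close>

lemma sum_index_box_pos_index:
  fixes f :: "nat \<Rightarrow> real"
  shows "(\<Sum>\<alpha>\<in>index_box. f (setting_of M (pos_index \<alpha> k))) = real M ^ (N - 2) * (\<Sum>r\<in>{1..M}. f r)"
proof -
  define i where "i = max 1 k"
  define I where "I = {1..N-1} - {i}"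
  have i: "i \<in> {1..N-1}" unfolding i_def using party N_ge_2 by auto
  define w where "w g = (if 1 \<le> k \<and> k < N - 1 then int (g (Suc k)) - 1 else 0)" for g :: "nat \<Rightarrow> nat"
  have index: "pos_index (g(i := v)) k = int v + w g" if g: "g \<in> I \<rightarrow>\<^sub>E {1..M}" and v: "v \<in> {1..M}" for g v
  proof -
    have "g (Suc k) \<ge> 1" if "1 \<le> k" "k < N - 1"
      using that PiE_mem[OF g, of "Suc k"] unfolding I_def i_def by auto
    then show ?thesis
      using v party unfolding pos_index_def bell_index_pos_def w_def i_def by (auto simp: of_nat_diff)
  qed
  have "(\<Sum>\<alpha>\<in>index_box. f (setting_of M (pos_index \<alpha> k)))
      = (\<Sum>g\<in>I \<rightarrow>\<^sub>E {1..M}. \<Sum>v\<in>{1..M}. f (setting_of M (pos_index (g(i := v)) k)))"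
    using sum_PiE_insert[of i I] i unfolding I_def by (simp add: insert_absorb)
  also have "\<dots> = (\<Sum>g\<in>I \<rightarrow>\<^sub>E {1..M}. \<Sum>r\<in>{1..M}. f r)"
  proof (rule sum.cong[OF refl])
    fix g assume g: "g \<in> I \<rightarrow>\<^sub>E {1..M}"
    have "(\<Sum>v\<in>{1..M}. f (setting_of M (pos_index (g(i := v)) k)))
        = (\<Sum>v\<in>{1..M}. f (setting_of M (int v + w g)))"
      by (rule sum.cong) (simp_all add: index[OF g])
    also have "\<dots> = (\<Sum>r\<in>{1..M}. f r)"
      by (rule sum.reindex_bij_betw[OF bij_betw_setting_of_shift[OF M_pos]])
    finally show "(\<Sum>v\<in>{1..M}. f (setting_of M (pos_index (g(i := v)) k))) = (\<Sum>r\<in>{1..M}. f r)" .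
  qed
  also have "card (I \<rightarrow>\<^sub>E {1..M}) = M ^ (N - 2)"
    using i unfolding I_def by (simp add: card_funcsetE numeral_2_eq_2)
  ultimately show ?thesis by simp
qed

lemma sum_pair_step:
  assumes x: "x \<in> {1..M}"
  shows "(\<Sum>r\<in>{1..M}. pair_step x r) = pair_corr (int x) (- ((-1)^k)) - pair_corr (int x) 0"
proof -
  have per: "pair_corr (z + int M) (c + 1) = pair_corr z c" for z c
    using pair_corr_periodic[of z 1 c] by simp
  show ?thesis
    using periodic_telescope_up[of pair_corr M x, OF per x] periodic_telescope_down[of pair_corr M x, OF per x]
    unfolding pair_step_def offset_def by (cases "even k") simp_all
qed

lemma bellI_ge_pair_corr_diff:
  assumes x: "x \<in> {1..M}"
  shows "bellI (Suc N) N M d p \<ge> pair_corr (int x) (- ((-1)^k)) - pair_corr (int x) 0"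
proof -
  have "real M ^ (N - 2) * (pair_corr (int x) (- ((-1)^k)) - pair_corr (int x) 0)
      = (\<Sum>\<alpha>\<in>index_box. pair_step x (setting_of M (pos_index \<alpha> k)))"
    by (simp only: sum_index_box_pos_index sum_pair_step[OF x])
  also have "\<dots> \<le> (\<Sum>\<alpha>\<in>index_box. pos_term \<alpha> + neg_term (shift_box \<alpha>))"
    by (rule sum_mono) (rule pos_term_add_neg_term_shift_box)
  also have "\<dots> = (\<Sum>\<alpha>\<in>index_box. pos_term \<alpha> + neg_term \<alpha>)"
    using sum.reindex_bij_betw[OF bij_betw_shift_box_index_box, of "\<lambda>\<beta>. neg_term \<beta>"]
    by (simp add: sum.distrib)
  finally show ?thesis
    using M_pos unfolding bellI_def by (simp add: field_simps)
qed

lemma expval_pair: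
  assumes x: "x \<in> {1..M}"
    and parties: "(q1, j1, q2, j2) = (k, x, N, y) \<or> (q1, j1, q2, j2) = (N, y, k, x)"
  shows "expval (Suc N) M d p [(q1, j1, c1), (q2, j2, c2)]
       = expect (Suc N) d p (pair_settings (int x)) (\<lambda>a. bracket d (c1 * int (a q1) + c2 * int (a q2)))"
proof -
  have "obs_setting M j = j" "obs_shift M j = 0" if "j \<in> {1..M}" for j
    using that setting_of_int[OF that] obs_setting_eq_setting_of[of j M]
    unfolding obs_shift_def by auto
  moreover have "term_setting (Suc N) M [(q1, j1, c1), (q2, j2, c2)] = pair_settings (int x)"
    unfolding term_setting_def pair_settings_def setting_of_int[OF x]
    using parties party x setting \<open>\<And>j. j \<in> {1..M} \<Longrightarrow> obs_setting M j = j\<close>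
    by (intro restrict_ext) auto
  ultimately show ?thesis
    using parties x setting unfolding expval_def expect_def bracket_def by auto
qed

lemma pair_corr_diff_add_pair_terms:
  assumes x: "x \<in> {1..M}"
  shows "pair_corr (int x) (- ((-1)^k)) - pair_corr (int x) 0
       + expval (Suc N) M d p [(k, x, 1), (N, y, -1)] + expval (Suc N) M d p [(N, y, 1), (k, x, -1)]
       = real d - 1"
proof -
  define s :: int where "s = (-1)^k"
  define F where "F a = bracket d (s * (int (a N) - s) - s * int (a k)) - bracket d (s * int (a N) - s * int (a k))
      + bracket d (int (a k) - int (a N)) + bracket d (int (a N) - int (a k))" for a :: "nat \<Rightarrow> nat"
  have "F = (\<lambda>a. real d - 1)"
  proof
    fix a
    show "F a = real d - 1"
    proof (cases "even k")
      case True
      then show ?thesis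
        using bracket_pred_add_bracket_neg[OF d_pos, of "int (a N) - int (a k)"]
        unfolding F_def s_def by (simp add: algebra_simps)
    next
      case False
      then show ?thesis
        using bracket_pred_add_bracket_neg[OF d_pos, of "int (a k) - int (a N)"]
        unfolding F_def s_def by (simp add: algebra_simps)
    qed
  qed
  moreover have "pair_corr (int x) (- ((-1)^k)) - pair_corr (int x) 0
       + expval (Suc N) M d p [(k, x, 1), (N, y, -1)] + expval (Suc N) M d p [(N, y, 1), (k, x, -1)]
      = expect (Suc N) d p (pair_settings (int x)) F"
    using expval_pair[OF x, of k x N y 1 "-1"] expval_pair[OF x, of N y k x 1 "-1"]
    unfolding pair_corr_def F_def expect_add expect_diff obs_value_int[OF x] s_def
    by simp
  ultimately show ?thesis
    using expect_const[OF behaviour pair_settings_in_settings] by simp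
qed

end

theorem theorem2:
  fixes N M d :: nat
    and p :: "(nat \<Rightarrow> nat) \<Rightarrow> (nat \<Rightarrow> nat) \<Rightarrow> real"
  assumes "N \<ge> 2" and "M \<ge> 2" and "d \<ge> 2"
    and "is_behaviour (N + 1) M d p"
    and "nonsignalling (N + 1) M d p"
    and "k < N"
    and "xk \<in> {1..M}" and "xN1 \<in> {1..M}"
  shows "bellI (N + 1) N M d p
           + expval (N + 1) M d p [(k, xk, 1), (N, xN1, -1)]
           + expval (N + 1) M d p [(N, xN1, 1), (k, xk, -1)]
         \<ge> real d - 1"
proof -
  interpret bell_scenario N M d k xN1 p
    using assms by unfold_locales auto
  show ?thesis
    using bellI_ge_pair_corr_diff[OF assms(7)] pair_corr_diff_add_pair_terms[OF assms(7)] by simp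
qed

end
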